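(* For every fixed $x\in\mathbb{R}$ and $A>1$ there exists $N_3>0$ depending only on $x$ and $A$ such that for all $n>N_3$ and all $w\in[1,A]$: $s_0/n<G_n(x)/2<AG_n(x)/2<\pi/2$ and $$D_n\big(wG_n(x)/2\big)\le e^{1-(w-1)\ln n}\,D_n\big(G_n(x)/2\big),$$ where $G_n(x)=\dfrac{8x-5\ln(2\ln n)}{2n(2\ln n)^{1/2}}+\dfrac{(32\ln n)^{1/2}}{n}$.
   Context: For $\alpha\in(0,\pi)$ let $D_n(\alpha)=\det_{1\le j,l\le n}\left(\frac{1}{2\pi}\int_\alpha^{2\pi-\alpha}e^{i(j-l)\theta}\,d\theta\right)$. By a result of Deift–Its–Krasovsky–Zhou there are constants $c_0\in\mathbb{R}$ and $s_0>0$ such that for every $\varepsilon>0$, uniformly in $s_0/n<\alpha<\pi-\varepsilon$, $$\ln D_n(\alpha)=n^2\ln\cos\frac{\alpha}{2}-\frac14\ln\Big(n\sin\frac{\alpha}{2}\Big)+c_0+O\Big(\frac{1}{n\sin(\alpha/2)}\Big);$$ $s_0$ denotes such a fixed constant. *)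

theory Defs
  imports "HOL-Analysis.Analysis" "Jordan_Normal_Form.Determinant"
begin

text \<open>Toeplitz determinant D_n(alpha) with symbol the indicator of the arc [alpha, 2pi - alpha].
  Matrix indices run over 0..n-1 (only j - l matters). The determinant is real (the matrix is
  real symmetric), so we take its real part.\<close>

definition toeplitz_entry :: "real \<Rightarrow> nat \<Rightarrow> nat \<Rightarrow> complex" where
  "toeplitz_entry \<alpha> j l =
     complex_of_real (1 / (2 * pi)) *
     integral {\<alpha>..2 * pi - \<alpha>} (\<lambda>\<theta>. exp (\<i> * complex_of_real ((real j - real l) * \<theta>)))"

definition D :: "nat \<Rightarrow> real \<Rightarrow> real" where
  "D n \<alpha> = Re (Determinant.det (Matrix.mat n n (\<lambda>(j, l). toeplitz_entry \<alpha> j l)))"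

definition G :: "nat \<Rightarrow> real \<Rightarrow> real" where
  "G n x = (8 * x - 5 * ln (2 * ln (real n))) / (2 * real n * sqrt (2 * ln (real n)))
           + sqrt (32 * ln (real n)) / real n"

end

theory Submission
  imports Defs "HOL-Real_Asymp.Real_Asymp"
begin

(*
  Since the arc is symmetric under theta |-> 2 pi - theta, the Toeplitz matrix is real and its
  quadratic form is 1/(2 pi) times the integral over the arc of |sum_j v_j exp(i j theta)|^2;
  a homotopy to the identity then gives D_n(alpha) >= 0. This sign information is essential:
  ln is totalised by ln x = ln |x|, so the DIKZ asymptotics alone only control |D_n|.

  The derivative of ln cos u is -tan u <= -u, so from G_n/2 to w G_n/2 the main term
  n^2 ln cos(alpha/2) drops by at least (w - 1) (n G_n / 4)^2, which is at least (w - 1) ln n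
  because (n G_n)^2 ~ 32 ln n. The sine term only helps, the error terms C / (n sin(alpha/2))
  tend to 0, and the main term at G_n/2 tends to -infinity, which forces D_n(G_n/2) > 0, so the
  logarithmic estimate can be exponentiated.
*)

lemma continuous_on_det:
  fixes A :: "real \<Rightarrow> real mat"
  assumes carrier: "\<And>t. t \<in> S \<Longrightarrow> A t \<in> carrier_mat n n"
    and entries: "\<And>i j. i < n \<Longrightarrow> j < n \<Longrightarrow> continuous_on S (\<lambda>t. A t $$ (i, j))"
  shows "continuous_on S (\<lambda>t. det (A t))"
proof -
  have "continuous_on S (\<lambda>t. \<Sum>p \<in> {p. p permutes {0..<n}}. signof p * (\<Prod>i = 0..<n. A t $$ (i, p i)))"
    by (intro continuous_intros entries) (auto simp: permutes_in_image)
  moreover have "det (A t) = (\<Sum>p \<in> {p. p permutes {0..<n}}. signof p * (\<Prod>i = 0..<n. A t $$ (i, p i)))"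
    if "t \<in> S" for t
    using det_def'[OF carrier[OF that]] .
  ultimately show ?thesis
    by (simp cong: continuous_on_cong)
qed

lemma det_ne_zero_if_quadratic_form_pos:
  fixes M :: "real mat"
  assumes M: "M \<in> carrier_mat n n"
    and form_pos: "\<And>v. \<exists>i<n. v i \<noteq> 0 \<Longrightarrow> 0 < (\<Sum>i<n. \<Sum>j<n. v i * v j * M $$ (i, j))"
  shows "det M \<noteq> 0"
proof
  assume "det M = 0"
  then obtain v where v: "v \<in> carrier_vec n" "v \<noteq> 0\<^sub>v n" "M *\<^sub>v v = 0\<^sub>v n"
    using det_0_iff_vec_prod_zero_field[OF M] by auto
  then have "\<exists>i<n. v $ i \<noteq> 0"
    by (metis carrier_vecD eq_vecI index_zero_vec(1,2))
  then have "0 < (\<Sum>i<n. \<Sum>j<n. v $ i * v $ j * M $$ (i, j))"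
    by (rule form_pos)
  also have "(\<Sum>i<n. \<Sum>j<n. v $ i * v $ j * M $$ (i, j)) = v \<bullet> (M *\<^sub>v v)"
    using v(1) M
    by (simp add: scalar_prod_def Matrix.row_def sum_distrib_left atLeast0LessThan algebra_simps)
  finally show False
    using v(1,3) by simp
qed

lemma det_nonneg_if_quadratic_form_nonneg:
  fixes M :: "real mat"
  assumes M: "M \<in> carrier_mat n n"
    and form_nonneg: "\<And>v. 0 \<le> (\<Sum>i<n. \<Sum>j<n. v i * v j * M $$ (i, j))"
  shows "0 \<le> det M"
proof (rule ccontr)
  assume det_neg: "\<not> 0 \<le> det M"
  define H where "H t = mat n n (\<lambda>(i, j). (1 - t) * (if i = j then 1 else 0) + t * M $$ (i, j))" for t
  have H_carrier: "H t \<in> carrier_mat n n" for t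
    by (simp add: H_def)
  have "H 0 = 1\<^sub>m n" and "H 1 = M"
    using M by (auto simp: H_def intro!: eq_matI)
  moreover have "continuous_on {0..1} (\<lambda>t. det (H t))"
    by (rule continuous_on_det[OF H_carrier]) (auto simp: H_def intro!: continuous_intros)
  ultimately obtain t where t: "0 \<le> t" "t < 1" "det (H t) = 0"
    using IVT2'[of "\<lambda>t. det (H t)" 1 0 0] det_neg by (auto simp: order_le_less)
  have "det (H t) \<noteq> 0"
  proof (rule det_ne_zero_if_quadratic_form_pos[OF H_carrier])
    fix v :: "nat \<Rightarrow> real"
    assume "\<exists>i<n. v i \<noteq> 0"
    then obtain k where k: "k < n" "v k \<noteq> 0"
      by blast
    have row: "(\<Sum>j<n. v i * v j * H t $$ (i, j)) = (1 - t) * (v i)\<^sup>2 + t * (\<Sum>j<n. v i * v j * M $$ (i, j))"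
      if "i < n" for i
    proof -
      have "(\<Sum>j<n. v i * v j * H t $$ (i, j))
          = (\<Sum>j<n. (1 - t) * (if j = i then v i * v j else 0) + t * (v i * v j * M $$ (i, j)))"
        using that by (intro sum.cong) (auto simp: H_def algebra_simps)
      then show ?thesis
        using that by (simp add: sum.distrib sum_distrib_left[symmetric] power2_eq_square)
    qed
    have "0 < (v k)\<^sup>2"
      using k by simp
    also have "\<dots> \<le> (\<Sum>i<n. (v i)\<^sup>2)"
      using k by (intro member_le_sum) auto
    finally have "0 < (1 - t) * (\<Sum>i<n. (v i)\<^sup>2) + t * (\<Sum>i<n. \<Sum>j<n. v i * v j * M $$ (i, j))"
      using t form_nonneg[of v] by (simp add: add_pos_nonneg)
    then show "0 < (\<Sum>i<n. \<Sum>j<n. v i * v j * H t $$ (i, j))"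
      by (simp add: row sum.distrib sum_distrib_left)
  qed
  with t(3) show False
    by contradiction
qed

lemma has_integral_sin_int_mult_symmetric:
  assumes "\<alpha> \<le> pi" and "k \<in> \<int>"
  shows "((\<lambda>\<theta>. sin (k * \<theta>)) has_integral 0) {\<alpha>..2 * pi - \<alpha>}"
proof (cases "k = 0")
  case False
  have "((\<lambda>\<theta>. sin (k * \<theta>)) has_integral (- cos (k * (2 * pi - \<alpha>)) / k - (- cos (k * \<alpha>) / k)))
      {\<alpha>..2 * pi - \<alpha>}"
  proof (rule fundamental_theorem_of_calculus)
    fix \<theta> assume "\<theta> \<in> {\<alpha>..2 * pi - \<alpha>}"
    show "((\<lambda>\<theta>. - cos (k * \<theta>) / k) has_vector_derivative sin (k * \<theta>)) (at \<theta> within {\<alpha>..2 * pi - \<alpha>})"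
      using False by (auto intro!: derivative_eq_intros simp flip: has_real_derivative_iff_has_vector_derivative)
  qed (use assms in auto)
  moreover obtain m where "k = of_int m"
    using \<open>k \<in> \<int>\<close> by (auto elim: Ints_cases)
  then have "cos (k * (2 * pi - \<alpha>)) = cos (2 * pi * of_int m - k * \<alpha>)"
    by (simp add: algebra_simps)
  then have "cos (k * (2 * pi - \<alpha>)) = cos (k * \<alpha>)"
    by (simp add: cos_diff)
  ultimately show ?thesis
    by simp
qed simp

definition arc_cos_coeff :: "real \<Rightarrow> real \<Rightarrow> real" where
  "arc_cos_coeff \<alpha> k = 1 / (2 * pi) * integral {\<alpha>..2 * pi - \<alpha>} (\<lambda>\<theta>. cos (k * \<theta>))"

lemma toeplitz_entry_eq_arc_cos_coeff:
  assumes "\<alpha> \<le> pi"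
  shows "toeplitz_entry \<alpha> j l = complex_of_real (arc_cos_coeff \<alpha> (real j - real l))"
proof -
  let ?k = "real j - real l" and ?S = "{\<alpha>..2 * pi - \<alpha>}"
  have exp_i: "exp (\<i> * complex_of_real t) = complex_of_real (cos t) + \<i> * complex_of_real (sin t)" for t
    by (simp add: cis_conv_exp[symmetric] complex_eq_iff)
  have cos: "((\<lambda>\<theta>. cos (?k * \<theta>)) has_integral integral ?S (\<lambda>\<theta>. cos (?k * \<theta>))) ?S"
    by (intro integrable_integral integrable_continuous_interval continuous_intros)
  have sin: "((\<lambda>\<theta>. sin (?k * \<theta>)) has_integral 0) ?S"
    using assms by (intro has_integral_sin_int_mult_symmetric) auto
  have "((\<lambda>\<theta>. exp (\<i> * complex_of_real (?k * \<theta>))) has_integral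
      complex_of_real (integral ?S (\<lambda>\<theta>. cos (?k * \<theta>)))) ?S"
    using has_integral_add[OF has_integral_of_real[OF cos] has_integral_mult_right[OF has_integral_of_real[OF sin]]]
    by (simp only: exp_i of_real_0 mult_zero_right add_0_right)
  from integral_unique[OF this] show ?thesis
    by (simp add: toeplitz_entry_def arc_cos_coeff_def)
qed

definition arc_toeplitz_mat :: "nat \<Rightarrow> real \<Rightarrow> real mat" where
  "arc_toeplitz_mat n \<alpha> = mat n n (\<lambda>(j, l). arc_cos_coeff \<alpha> (real j - real l))"

lemma D_eq_det_arc_toeplitz_mat:
  assumes "\<alpha> \<le> pi"
  shows "D n \<alpha> = det (arc_toeplitz_mat n \<alpha>)"
proof -
  have "mat n n (\<lambda>(j, l). toeplitz_entry \<alpha> j l) = of_real_hom.mat_hom (arc_toeplitz_mat n \<alpha>)"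
    by (rule eq_matI) (auto simp: arc_toeplitz_mat_def toeplitz_entry_eq_arc_cos_coeff[OF assms])
  then show ?thesis
    unfolding D_def by (simp add: of_real_hom.hom_det)
qed

lemma arc_toeplitz_quadratic_form_nonneg:
  "0 \<le> (\<Sum>j<n. \<Sum>l<n. v j * v l * arc_cos_coeff \<alpha> (real j - real l))"
proof -
  let ?S = "{\<alpha>..2 * pi - \<alpha>}"
  let ?q = "\<lambda>\<theta>. \<Sum>j<n. \<Sum>l<n. v j * v l * cos ((real j - real l) * \<theta>)"
  have "?q \<theta> = (\<Sum>j<n. v j * cos (real j * \<theta>))\<^sup>2 + (\<Sum>j<n. v j * sin (real j * \<theta>))\<^sup>2" for \<theta>
    by (simp add: power2_eq_square sum_product left_diff_distrib cos_diff sum.distrib[symmetric]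
        algebra_simps)
  then have "0 \<le> integral ?S ?q"
    by (intro integral_nonneg integrable_continuous_interval continuous_intros) auto
  also have "integral ?S ?q = (\<Sum>j<n. \<Sum>l<n. v j * v l * integral ?S (\<lambda>\<theta>. cos ((real j - real l) * \<theta>)))"
    by (simp add: integral_sum integrable_continuous_interval continuous_intros)
  finally have "0 \<le> 1 / (2 * pi) * (\<Sum>j<n. \<Sum>l<n. v j * v l * integral ?S (\<lambda>\<theta>. cos ((real j - real l) * \<theta>)))"
    by simp
  then show ?thesis
    by (simp add: arc_cos_coeff_def sum_distrib_left mult_ac)
qed

lemma D_nonneg:
  assumes "\<alpha> \<le> pi"
  shows "0 \<le> D n \<alpha>"
  unfolding D_eq_det_arc_toeplitz_mat[OF assms]
  by (rule det_nonneg_if_quadratic_form_nonneg[of _ n])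
    (auto simp: arc_toeplitz_mat_def arc_toeplitz_quadratic_form_nonneg)

lemma ln_cos_le_tangent:
  fixes s u :: real
  assumes "0 \<le> s" "s \<le> u" "u < pi / 2"
  shows "ln (cos u) \<le> ln (cos s) - (u - s) * s"
proof -
  have "ln (cos u) + (u - s) * s \<le> ln (cos s) + (s - s) * s"
  proof (rule DERIV_nonpos_imp_nonincreasing[OF \<open>s \<le> u\<close>])
    fix v assume v: "s \<le> v" "v \<le> u"
    have "0 < cos v"
      using v assms by (intro cos_gt_zero_pi) auto
    moreover have "s \<le> tan v"
      using v assms abs_tan_ge[of v] tan_pos_pi2_le[of v] by auto
    ultimately show "\<exists>y. DERIV (\<lambda>v. ln (cos v) + (v - s) * s) v :> y \<and> y \<le> 0"
      by (intro exI[of _ "s - tan v"] conjI) (auto intro!: derivative_eq_intros simp: tan_def field_simps)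
  qed
  then show ?thesis
    by simp
qed

definition dikz_main_term :: "real \<Rightarrow> nat \<Rightarrow> real \<Rightarrow> real" where
  "dikz_main_term c0 n \<alpha> = (real n)^2 * ln (cos (\<alpha> / 2)) - 1/4 * ln (real n * sin (\<alpha> / 2)) + c0"

lemma dikz_main_term_decrease:
  assumes "0 < \<alpha>" "\<alpha> \<le> \<beta>" "\<beta> < pi"
  shows "dikz_main_term c0 n \<beta> \<le> dikz_main_term c0 n \<alpha> - (real n)^2 * (\<beta> - \<alpha>) * \<alpha> / 4"
proof -
  have "ln (cos (\<beta> / 2)) \<le> ln (cos (\<alpha> / 2)) - (\<beta> / 2 - \<alpha> / 2) * (\<alpha> / 2)"
    using assms by (intro ln_cos_le_tangent) auto
  from mult_left_mono[OF this, of "(real n)^2"] have cos_part: "(real n)^2 * ln (cos (\<beta> / 2))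
      \<le> (real n)^2 * ln (cos (\<alpha> / 2)) - (real n)^2 * (\<beta> - \<alpha>) * \<alpha> / 4"
    by (simp add: field_simps)
  have "ln (real n * sin (\<alpha> / 2)) \<le> ln (real n * sin (\<beta> / 2))"
  proof (cases "n = 0")
    case False
    have "0 < sin (\<alpha> / 2)"
      using assms by (intro sin_gt_zero) auto
    moreover have "sin (\<alpha> / 2) \<le> sin (\<beta> / 2)"
      using assms by (intro sin_monotone_2pi_le) auto
    ultimately show ?thesis
      using False by (intro ln_mono mult_left_mono) auto
  qed simp
  with cos_part show ?thesis
    unfolding dikz_main_term_def by linarith
qed

lemma le_exp_mult_if_ln_close:
  fixes a b fa fb e :: real
  assumes "0 \<le> a" "0 \<le> b"
    and "\<bar>ln a - fa\<bar> \<le> e" "\<bar>ln b - fb\<bar> \<le> e"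
    and "fb + e < 0"
  shows "a \<le> exp (fa - fb + 2 * e) * b"
proof (cases "a = 0")
  case False
  have "b \<noteq> 0"
    using assms(4,5) by auto \<comment> \<open>since ln 0 = 0\<close>
  then have "0 < a" "0 < b"
    using False assms(1,2) by auto
  have "a = exp (ln a)"
    using \<open>0 < a\<close> by simp
  also have "\<dots> \<le> exp (fa - fb + 2 * e + ln b)"
    using assms(3,4) by simp
  also have "\<dots> = exp (fa - fb + 2 * e) * b"
    using \<open>0 < b\<close> by (simp add: exp_add)
  finally show ?thesis .
qed (use assms(2) in simp)

lemma D_dilation_bound:
  fixes n :: nat and c0 C \<gamma> w a :: real
  assumes approx: "\<And>\<alpha>. a < \<alpha> \<Longrightarrow> \<alpha> < pi / 2 \<Longrightarrow>
        \<bar>ln (D n \<alpha>) - dikz_main_term c0 n \<alpha>\<bar> \<le> C / (real n * sin (\<alpha> / 2))"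
    and a: "a < \<gamma> / 2" and \<gamma>: "0 < \<gamma>" and w: "1 \<le> w" "w * \<gamma> < pi"
    and log_n: "ln (real n) \<le> (real n * \<gamma>)^2 / 16"
    and small_error: "\<bar>C\<bar> / (real n * sin (\<gamma> / 4)) \<le> 1/4"
    and main_neg: "dikz_main_term c0 n (\<gamma> / 2) + 1/4 < 0"
  shows "D n (w * \<gamma> / 2) \<le> exp (1 - (w - 1) * ln (real n)) * D n (\<gamma> / 2)"
proof -
  let ?e = "\<bar>C\<bar> / (real n * sin (\<gamma> / 4))"
  have "\<gamma> \<le> w * \<gamma>"
    using mult_right_mono[OF w(1), of \<gamma>] \<gamma> by simp
  then have "\<gamma> < pi"
    using w(2) by linarith
  have "w * \<gamma> / 2 < pi"
    using w(2) pi_gt_zero by linarith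
  have close: "\<bar>ln (D n \<alpha>) - dikz_main_term c0 n \<alpha>\<bar> \<le> ?e" if "\<gamma> / 2 \<le> \<alpha>" "\<alpha> < pi / 2" for \<alpha>
  proof (cases "n = 0")
    case False
    have "0 < sin (\<gamma> / 4)"
      using \<gamma> \<open>\<gamma> < pi\<close> by (intro sin_gt_zero) auto
    moreover have "sin (\<gamma> / 4) \<le> sin (\<alpha> / 2)"
      using that \<gamma> by (intro sin_monotone_2pi_le) auto
    ultimately have "C / (real n * sin (\<alpha> / 2)) \<le> ?e"
      using False by (intro order.trans[OF divide_right_mono divide_left_mono]) auto
    then show ?thesis
      using approx[OF _ that(2)] a that(1) by linarith
  qed (use approx[OF _ that(2)] a that(1) in simp)
  have "dikz_main_term c0 n (w * \<gamma> / 2)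
      \<le> dikz_main_term c0 n (\<gamma> / 2) - (real n)^2 * (w * \<gamma> / 2 - \<gamma> / 2) * (\<gamma> / 2) / 4"
    using \<gamma> \<open>\<gamma> \<le> w * \<gamma>\<close> \<open>w * \<gamma> / 2 < pi\<close> by (intro dikz_main_term_decrease) auto
  moreover have "(real n)^2 * (w * \<gamma> / 2 - \<gamma> / 2) * (\<gamma> / 2) / 4 = (w - 1) * ((real n * \<gamma>)^2 / 16)"
    by (simp add: field_simps power2_eq_square)
  moreover have "(w - 1) * ln (real n) \<le> (w - 1) * ((real n * \<gamma>)^2 / 16)"
    using w log_n by (intro mult_left_mono) auto
  ultimately have decrease:
    "dikz_main_term c0 n (w * \<gamma> / 2) - dikz_main_term c0 n (\<gamma> / 2) \<le> - (w - 1) * ln (real n)"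
    by linarith
  have "D n (w * \<gamma> / 2) \<le> exp (dikz_main_term c0 n (w * \<gamma> / 2) - dikz_main_term c0 n (\<gamma> / 2) + 2 * ?e) * D n (\<gamma> / 2)"
    using \<open>\<gamma> \<le> w * \<gamma>\<close> \<open>\<gamma> < pi\<close> w(2) small_error main_neg pi_gt_zero
    by (intro le_exp_mult_if_ln_close D_nonneg close) linarith+
  also have "\<dots> \<le> exp (1 - (w - 1) * ln (real n)) * D n (\<gamma> / 2)"
    using decrease small_error \<open>\<gamma> < pi\<close> pi_gt_zero
    by (intro mult_right_mono D_nonneg iffD2[OF exp_le_cancel_iff]) linarith+
  finally show ?thesis .
qed

lemma eventually_G_dilation_hypotheses:
  fixes x s0 A C c0 :: real
  shows "eventually (\<lambda>n. 0 < G n x \<and> s0 / real n < G n x / 2 \<and> A * G n x < 1 \<and>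
      ln (real n) \<le> (real n * G n x)^2 / 16 \<and> \<bar>C\<bar> / (real n * sin (G n x / 4)) \<le> 1/4 \<and>
      dikz_main_term c0 n (G n x / 2) + 1/4 < 0) sequentially"
proof -
  have "eventually (\<lambda>n. 0 < G n x) sequentially"
    and "eventually (\<lambda>n. s0 / real n < G n x / 2) sequentially"
    and "eventually (\<lambda>n. A * G n x < 1) sequentially"
    and "eventually (\<lambda>n. ln (real n) < (real n * G n x)^2 / 16) sequentially"
    and "eventually (\<lambda>n. \<bar>C\<bar> / (real n * sin (G n x / 4)) < 1/4) sequentially"
    and "eventually (\<lambda>n. dikz_main_term c0 n (G n x / 2) + 1/4 < 0) sequentially"
    unfolding G_def dikz_main_term_def by (real_asymp simp: powr_half_sqrt)+
  then show ?thesis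
    by eventually_elim auto
qed

theorem lemma9:
  fixes s0 c0 x A :: real
  assumes s0_pos: "s0 > 0"
    and DIKZ: "\<forall>\<epsilon>>0. \<exists>C N0. \<forall>n::nat. n \<ge> N0 \<longrightarrow> (\<forall>\<alpha>. s0 / real n < \<alpha> \<and> \<alpha> < pi - \<epsilon> \<longrightarrow>
        \<bar>ln (D n \<alpha>) - ((real n)^2 * ln (cos (\<alpha> / 2)) - 1/4 * ln (real n * sin (\<alpha> / 2)) + c0)\<bar>
          \<le> C / (real n * sin (\<alpha> / 2)))"
    and A_gt: "A > 1"
  shows "\<exists>N3>0. \<forall>n::nat. real n > N3 \<longrightarrow> (\<forall>w\<in>{1..A}.
            s0 / real n < G n x / 2 \<and> G n x / 2 < A * G n x / 2 \<and> A * G n x / 2 < pi / 2 \<and>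
            D n (w * G n x / 2) \<le> exp (1 - (w - 1) * ln (real n)) * D n (G n x / 2))"
proof -
  obtain C N0 where approx: "\<And>n \<alpha>. N0 \<le> n \<Longrightarrow> s0 / real n < \<alpha> \<Longrightarrow> \<alpha> < pi / 2 \<Longrightarrow>
      \<bar>ln (D n \<alpha>) - dikz_main_term c0 n \<alpha>\<bar> \<le> C / (real n * sin (\<alpha> / 2))"
    using DIKZ[rule_format, of "pi / 2"] unfolding dikz_main_term_def by auto
  obtain M where M: "\<And>n. M \<le> n \<Longrightarrow> N0 \<le> n \<and> 0 < G n x \<and> s0 / real n < G n x / 2 \<and> A * G n x < 1 \<and>
      ln (real n) \<le> (real n * G n x)^2 / 16 \<and> \<bar>C\<bar> / (real n * sin (G n x / 4)) \<le> 1/4 \<and>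
      dikz_main_term c0 n (G n x / 2) + 1/4 < 0"
    using eventually_conj[OF eventually_ge_at_top eventually_G_dilation_hypotheses]
    unfolding eventually_sequentially by blast
  show ?thesis
  proof (intro exI[of _ "real M + 1"] conjI allI impI ballI)
    fix n :: nat and w :: real
    assume "real M + 1 < real n" and w: "w \<in> {1..A}"
    then have hyps: "N0 \<le> n" "0 < G n x" "s0 / real n < G n x / 2" "A * G n x < 1"
      "ln (real n) \<le> (real n * G n x)^2 / 16" "\<bar>C\<bar> / (real n * sin (G n x / 4)) \<le> 1/4"
      "dikz_main_term c0 n (G n x / 2) + 1/4 < 0"
      using M[of n] by auto
    then show "s0 / real n < G n x / 2" "G n x / 2 < A * G n x / 2" "A * G n x / 2 < pi / 2"
      using A_gt pi_gt3 by auto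
    have "w * G n x \<le> A * G n x"
      using w hyps(2) by (intro mult_right_mono) auto
    then have "w * G n x < pi"
      using hyps(4) pi_gt3 by linarith
    with hyps w show "D n (w * G n x / 2) \<le> exp (1 - (w - 1) * ln (real n)) * D n (G n x / 2)"
      by (intro D_dilation_bound[OF approx[OF hyps(1)]]) auto
  qed simp
qed

end
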